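(* Let $t,m$ be positive integers. Then for all non-negative integers $n$, \[ p_{mt,t}(n)= p(n)+\sum_{r=1}^{\infty}p\big(n-tr(2rm-m+2)\big)-\sum_{s=1}^{\infty}p\big(n-t(2s-1)(sm-m+1)\big). \]
   Context: $p(n)$ denotes the number of partitions of $n$ (non-increasing sequences of positive integers summing to $n$), with $p(0)=1$ and the convention $p(n)=0$ for negative integers $n$. For positive integers $A$ and $a$, and a partition $\lambda$, $\mathrm{mex}_{A,a}(\lambda)$ is the smallest positive integer congruent to $a$ modulo $A$ that is not a part of $\lambda$; $p_{A,a}(n)$ is the number of partitions $\lambda$ of $n$ with $\mathrm{mex}_{A,a}(\lambda)\equiv a\pmod{2A}$. *)

theory Defs
  imports Complex_Main "HOL-Number_Theory.Cong"
begin

definition partitions :: "nat \<Rightarrow> nat list set" where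
  "partitions n = {xs. sorted_wrt (\<ge>) xs \<and> (\<forall>x\<in>set xs. 0 < x) \<and> sum_list xs = n}"

definition partp :: "int \<Rightarrow> nat" where
  "partp k = (if k < 0 then 0 else card (partitions (nat k)))"

definition mex :: "nat \<Rightarrow> nat \<Rightarrow> nat list \<Rightarrow> nat" where
  "mex A a xs = (LEAST k. 0 < k \<and> [k = a] (mod A) \<and> k \<notin> set xs)"

definition pmex :: "nat \<Rightarrow> nat \<Rightarrow> nat \<Rightarrow> nat" where
  "pmex A a n = card {xs \<in> partitions n. [mex A a xs = a] (mod (2 * A))}"

end

theory Submission
  imports Defs "HOL-Library.Multiset"
begin

(*
  The positive integers congruent to t modulo mt form the progression a_j = t + j*mt, so the
  mex of a partition is a_J for the first index J with a_J not a part, and it is congruent to t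
  modulo 2mt exactly when J is even. Removing the parts a_0, ..., a_(j-1) maps the partitions
  of n containing them bijectively onto the partitions of n - S_j, where
  S_j = a_0 + ... + a_(j-1). Hence p(n - S_j) - p(n - S_(j+1)) partitions have J = j, and
  summing over even j gives the alternating series, with S_(2r) = tr(2rm - m + 2) and
  S_(2s-1) = t(2s - 1)(sm - m + 1).
*)

definition mpartitions :: "nat \<Rightarrow> nat multiset set" where
  "mpartitions n = {M. 0 \<notin># M \<and> sum_mset M = n}"

lemma sort_eq_rev_if_sorted_desc:
  assumes "sorted_wrt (\<ge>) xs"
  shows "sort xs = rev (xs :: 'a :: linorder list)"
  by (rule properties_for_sort) (use assms in \<open>simp_all add: sorted_wrt_rev\<close>)

lemma bij_betw_mset_partitions: "bij_betw mset (partitions n) (mpartitions n)"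
proof (rule bij_betw_byWitness[where f' = "\<lambda>M. rev (sorted_list_of_multiset M)"])
  show "\<forall>xs\<in>partitions n. rev (sorted_list_of_multiset (mset xs)) = xs"
    by (simp add: partitions_def sort_eq_rev_if_sorted_desc)
  show "\<forall>M\<in>mpartitions n. mset (rev (sorted_list_of_multiset M)) = M"
    by simp
  show "mset ` partitions n \<subseteq> mpartitions n"
    by (auto simp: partitions_def mpartitions_def sum_mset_sum_list)
  show "(\<lambda>M. rev (sorted_list_of_multiset M)) ` mpartitions n \<subseteq> partitions n"
    by (auto simp: partitions_def mpartitions_def sorted_wrt_rev sum_mset_sum_list[symmetric]
        intro: gr0I)
qed

lemma finite_partitions: "finite (partitions n)"
proof (rule finite_subset[OF _ finite_lists_length_le[of "{..n}" n]])
  show "partitions n \<subseteq> {xs. set xs \<subseteq> {..n} \<and> length xs \<le> n}"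
  proof
    fix xs assume "xs \<in> partitions n"
    then have pos: "\<forall>x\<in>set xs. 0 < x" and sum: "sum_list xs = n"
      by (auto simp: partitions_def)
    have "set xs \<subseteq> {..n}"
      using member_le_sum_list sum by fastforce
    moreover have "length xs \<le> sum_list xs"
      using pos by (induction xs) auto
    ultimately show "xs \<in> {xs. set xs \<subseteq> {..n} \<and> length xs \<le> n}"
      using sum by simp
  qed
qed auto

lemma partp_eq_card_mpartitions:
  "partp (int n - int k) = (if k \<le> n then card (mpartitions (n - k)) else 0)"
  using bij_betw_same_card[OF bij_betw_mset_partitions] by (simp add: partp_def nat_diff_distrib)

lemma mset_set_subseteq_iff:
  assumes "finite F"
  shows "mset_set F \<subseteq># M \<longleftrightarrow> F \<subseteq> set_mset M"
proof
  assume "F \<subseteq> set_mset M"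
  then have "mset_set F \<subseteq># mset_set (set_mset M)"
    by (rule subset_imp_msubset_mset_set) simp
  then show "mset_set F \<subseteq># M"
    using mset_set_set_mset_msubset subset_mset.order_trans by blast
qed (use assms set_mset_mono in fastforce)

lemma mpartitions_superset:
  assumes "finite F" "0 \<notin> F"
  shows "{M \<in> mpartitions n. F \<subseteq> set_mset M} =
    (if \<Sum>F \<le> n then (\<lambda>M. M + mset_set F) ` mpartitions (n - \<Sum>F) else {})"
proof -
  have sum_F: "sum_mset (mset_set F) = \<Sum>F"
    by (simp add: sum_unfold_sum_mset)
  have "M \<in> (\<lambda>M. M + mset_set F) ` mpartitions (n - \<Sum>F) \<and> \<Sum>F \<le> n"
    if "M \<in> mpartitions n" "F \<subseteq> set_mset M" for M
  proof -
    have "mset_set F \<subseteq># M"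
      using that(2) mset_set_subseteq_iff[OF assms(1)] by blast
    then have split: "M = (M - mset_set F) + mset_set F"
      by simp
    then have "sum_mset M = sum_mset (M - mset_set F) + \<Sum>F"
      by (metis sum_F sum_mset.union)
    moreover have "0 \<notin># M - mset_set F"
      using that(1) by (auto simp: mpartitions_def dest: in_diffD)
    ultimately show ?thesis
      using that(1) split by (auto simp: mpartitions_def intro!: image_eqI)
  qed
  moreover have "M + mset_set F \<in> mpartitions n \<and> F \<subseteq> set_mset (M + mset_set F)"
    if "\<Sum>F \<le> n" "M \<in> mpartitions (n - \<Sum>F)" for M
    using that assms by (auto simp: mpartitions_def sum_F)
  ultimately show ?thesis
    by (auto simp del: set_mset_union)
qed

lemma card_partitions_superset:
  assumes "finite F" "0 \<notin> F"
  shows "card {xs \<in> partitions n. F \<subseteq> set xs} = partp (int n - int (\<Sum>F))"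
proof -
  have "bij_betw mset
      {xs \<in> partitions n. F \<subseteq> set xs} {M \<in> mpartitions n. F \<subseteq> set_mset M}"
  proof (rule bij_betw_subset[OF bij_betw_mset_partitions[of n]])
    show "mset ` {xs \<in> partitions n. F \<subseteq> set xs} =
        {M \<in> mpartitions n. F \<subseteq> set_mset M}"
      unfolding bij_betw_imp_surj_on[OF bij_betw_mset_partitions, symmetric] by auto
  qed auto
  then have "card {xs \<in> partitions n. F \<subseteq> set xs} =
      card {M \<in> mpartitions n. F \<subseteq> set_mset M}"
    by (rule bij_betw_same_card)
  also have "\<dots> = (if \<Sum>F \<le> n then card (mpartitions (n - \<Sum>F)) else 0)"
    unfolding mpartitions_superset[OF assms] by (simp add: card_image)
  finally show ?thesis
    by (simp only: partp_eq_card_mpartitions)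
qed

definition first_missing :: "(nat \<Rightarrow> nat) \<Rightarrow> nat list \<Rightarrow> nat" where
  "first_missing f xs = (LEAST j. f j \<notin> set xs)"

context
  fixes f :: "nat \<Rightarrow> nat"
  assumes strict_mono_seq: "strict_mono f" and seq_0_pos: "0 < f 0"
begin

lemma index_less_seq: "j < f j"
proof (induction j)
  case (Suc j)
  then show ?case
    using strict_monoD[OF strict_mono_seq, of j "Suc j"] by simp
qed (rule seq_0_pos)

lemma seq_pos: "0 < f j"
  using index_less_seq[of j] by simp

lemma index_le_sum_seq: "j \<le> (\<Sum>i<j. f i)"
proof -
  have "(\<Sum>i<j. 1) \<le> (\<Sum>i<j. f i)"
    by (rule sum_mono) (simp add: Suc_le_eq seq_pos)
  then show ?thesis by simp
qed

lemma seq_notin_if_sum_list_less: "sum_list xs < f j \<Longrightarrow> f j \<notin> set xs"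
  using member_le_sum_list by fastforce

lemma seq_first_missing_notin: "f (first_missing f xs) \<notin> set xs"
  unfolding first_missing_def
  by (rule LeastI[of _ "sum_list xs"]) (rule seq_notin_if_sum_list_less[OF index_less_seq])

lemma first_missing_le: "first_missing f xs \<le> j" if "f j \<notin> set xs"
  unfolding first_missing_def using that by (rule Least_le)

lemma first_missing_eq_iff:
  "first_missing f xs = j \<longleftrightarrow> f ` {..<j} \<subseteq> set xs \<and> f j \<notin> set xs"
proof
  assume j: "first_missing f xs = j"
  have "f i \<in> set xs" if "i < j" for i
    using that j not_less_Least unfolding first_missing_def by blast
  then show "f ` {..<j} \<subseteq> set xs \<and> f j \<notin> set xs"
    using j seq_first_missing_notin by blast
next
  assume "f ` {..<j} \<subseteq> set xs \<and> f j \<notin> set xs"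
  then show "first_missing f xs = j"
    unfolding first_missing_def by (intro Least_equality) (auto simp: not_less[symmetric])
qed

lemma first_missing_partition_le: "xs \<in> partitions n \<Longrightarrow> first_missing f xs \<le> n"
  by (rule first_missing_le, rule seq_notin_if_sum_list_less)
    (use index_less_seq in \<open>simp add: partitions_def\<close>)

lemma card_partitions_superset_seq_prefix:
  "card {xs \<in> partitions n. f ` {..<j} \<subseteq> set xs} = partp (int n - int (\<Sum>i<j. f i))"
proof -
  have "\<Sum>(f ` {..<j}) = (\<Sum>i<j. f i)"
    using strict_mono_imp_inj_on[OF strict_mono_seq] by (simp add: sum.reindex)
  moreover have "0 \<notin> f ` {..<j}"
    using seq_pos by (metis less_irrefl imageE)
  ultimately show ?thesis
    using card_partitions_superset[of "f ` {..<j}" n] by simp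
qed

lemma card_first_missing_eq:
  "real (card {xs \<in> partitions n. first_missing f xs = j}) =
     real (partp (int n - int (\<Sum>i<j. f i))) - real (partp (int n - int (\<Sum>i<Suc j. f i)))"
proof -
  define C where "C j = {xs \<in> partitions n. f ` {..<j} \<subseteq> set xs}" for j
  have fin: "finite (C (Suc j))"
    using finite_partitions by (rule rev_finite_subset) (auto simp: C_def)
  have sub: "C (Suc j) \<subseteq> C j"
    by (auto simp: C_def lessThan_Suc)
  have "{xs \<in> partitions n. first_missing f xs = j} = C j - C (Suc j)"
    by (auto simp: C_def first_missing_eq_iff lessThan_Suc)
  then have "card {xs \<in> partitions n. first_missing f xs = j} = card (C j) - card (C (Suc j))"
    using card_Diff_subset[OF fin sub] by simp
  moreover have "card (C (Suc j)) \<le> card (C j)"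
    using finite_partitions by (intro card_mono sub) (auto intro: rev_finite_subset simp: C_def)
  ultimately show ?thesis
    by (simp add: of_nat_diff C_def card_partitions_superset_seq_prefix)
qed

lemma card_first_missing_even:
  "real (card {xs \<in> partitions n. even (first_missing f xs)}) =
     real (partp (int n))
   + (\<Sum>r. real (partp (int n - int (\<Sum>i<2 * Suc r. f i))))
   - (\<Sum>s. real (partp (int n - int (\<Sum>i<Suc (2 * s). f i))))"
proof -
  define N where "N j = real (partp (int n - int (\<Sum>i<j. f i)))" for j
  have N_vanish: "N j = 0" if "n < j" for j
  proof -
    have "int n - int (\<Sum>i<j. f i) < 0"
      using index_le_sum_seq[of j] that by linarith
    then show ?thesis by (simp add: N_def partp_def)
  qed
  have "{xs \<in> partitions n. even (first_missing f xs)} =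
      (\<Union>i<Suc n. {xs \<in> partitions n. first_missing f xs = 2 * i})"
    using first_missing_partition_le by (fastforce elim!: evenE)
  then have "card {xs \<in> partitions n. even (first_missing f xs)} =
      (\<Sum>i<Suc n. card {xs \<in> partitions n. first_missing f xs = 2 * i})"
    by (simp only:) (rule card_UN_disjoint, auto intro: rev_finite_subset[OF finite_partitions])
  then have "real (card {xs \<in> partitions n. even (first_missing f xs)}) =
      (\<Sum>i<Suc n. N (2 * i) - N (Suc (2 * i)))"
    by (simp only: of_nat_sum card_first_missing_eq N_def)
  also have "\<dots> = N 0 + (\<Sum>r<n. N (2 * Suc r)) - (\<Sum>s<Suc n. N (Suc (2 * s)))"
    by (simp only: sum_subtractf sum.lessThan_Suc_shift) simp
  also have "(\<Sum>r<n. N (2 * Suc r)) = (\<Sum>r. N (2 * Suc r))"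
    by (rule suminf_finite[symmetric]) (auto intro: N_vanish)
  also have "(\<Sum>s<Suc n. N (Suc (2 * s))) = (\<Sum>s. N (Suc (2 * s)))"
    by (rule suminf_finite[symmetric]) (auto intro: N_vanish)
  finally show ?thesis
    by (simp add: N_def)
qed

end

lemma cong_iff_in_progression:
  fixes a A k :: nat
  assumes "0 < a" "a \<le> A" "0 < k"
  shows "[k = a] (mod A) \<longleftrightarrow> (\<exists>j. k = a + A * j)"
proof
  assume cong: "[k = a] (mod A)"
  have "a \<le> k"
  proof (rule ccontr)
    assume "\<not> a \<le> k"
    then have "A dvd a - k"
      using cong_altdef_nat[of k a A] cong_sym[OF cong] by simp
    moreover have "0 < a - k" "a - k < A"
      using \<open>\<not> a \<le> k\<close> assms by auto
    ultimately show False
      using nat_dvd_not_less by blast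
  qed
  then have "A dvd k - a"
    using cong_altdef_nat[of a k A] cong by simp
  then obtain j where "k - a = A * j"
    by (elim dvdE)
  then have "k = a + A * j"
    using \<open>a \<le> k\<close> by simp
  then show "\<exists>j. k = a + A * j" ..
next
  assume "\<exists>j. k = a + A * j"
  then show "[k = a] (mod A)"
    by (auto simp: cong_def)
qed

lemma progression_cong_double_iff:
  fixes a A j :: nat
  assumes "0 < A"
  shows "[a + A * j = a] (mod (2 * A)) \<longleftrightarrow> even j"
proof -
  have "[a + A * j = a] (mod (2 * A)) \<longleftrightarrow> 2 * A dvd A * j"
    using cong_altdef_nat[of a "a + A * j" "2 * A"] by simp
  also have "\<dots> \<longleftrightarrow> even j"
    using assms by (simp add: mult.commute[of 2 A])
  finally show ?thesis .
qed

lemma mex_eq_progression_first_missing: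
  assumes "0 < a" "a \<le> A"
  shows "mex A a xs = a + A * first_missing (\<lambda>j. a + A * j) xs"
proof -
  define f where "f j = a + A * j" for j
  define S where "S = {j. f j \<notin> set xs}"
  have mono_f: "strict_mono f"
    using assms by (intro strict_monoI) (simp add: f_def)
  have f_0: "0 < f 0"
    using assms by (simp add: f_def)
  have in_range: "0 < k \<and> [k = a] (mod A) \<longleftrightarrow> k \<in> range f" for k
  proof (cases "0 < k")
    case True
    then show ?thesis
      unfolding cong_iff_in_progression[OF assms True] f_def image_iff by simp
  next
    case False
    then show ?thesis
      using assms by (simp add: f_def image_iff)
  qed
  have "0 < k \<and> [k = a] (mod A) \<and> k \<notin> set xs \<longleftrightarrow> k \<in> f ` S" for k
    using in_range[of k] by (auto simp: S_def)
  then have "mex A a xs = (LEAST k. k \<in> f ` S)"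
    unfolding mex_def by (simp only:)
  also have "\<dots> = f (LEAST j. j \<in> S)"
  proof (rule Least_mono[OF strict_mono_mono[OF mono_f]])
    show "\<exists>j\<in>S. \<forall>i\<in>S. j \<le> i"
      using seq_first_missing_notin[OF mono_f f_0] first_missing_le[OF mono_f f_0]
      unfolding S_def by blast
  qed
  finally show ?thesis
    by (simp add: f_def S_def first_missing_def)
qed

lemma pmex_eq_card_even_first_missing:
  assumes "0 < a" "a \<le> A"
  shows "pmex A a n = card {xs \<in> partitions n. even (first_missing (\<lambda>j. a + A * j) xs)}"
  using assms
  by (simp add: pmex_def mex_eq_progression_first_missing progression_cong_double_iff)

lemma sum_progression_odd: "(\<Sum>i<Suc (2 * s). a + A * i) = Suc (2 * s) * (a + A * s)"
  for a A s :: nat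
  by (induction s) (simp_all add: algebra_simps)

lemma sum_progression_even: "(\<Sum>i<2 * Suc r. a + A * i) = Suc r * (2 * a + A * (2 * r + 1))"
  for a A r :: nat
  using sum_progression_odd[of a A r] by (simp add: algebra_simps)

theorem pmex_eq_alternating_sum_partp:
  assumes "0 < a" "a \<le> A"
  shows "real (pmex A a n) =
           real (partp (int n))
         + (\<Sum>r. real (partp (int n - int (Suc r * (2 * a + A * (2 * r + 1))))))
         - (\<Sum>s. real (partp (int n - int (Suc (2 * s) * (a + A * s)))))"
proof -
  have "strict_mono (\<lambda>j. a + A * j)" "0 < a + A * 0"
    using assms by (auto intro: strict_monoI)
  from card_first_missing_even[OF this] show ?thesis
    by (simp only: pmex_eq_card_even_first_missing[OF assms]
        sum_progression_odd sum_progression_even)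
qed

theorem theorem3p1:
  fixes t m n :: nat
  assumes "0 < t" and "0 < m"
  shows "real (pmex (m * t) t n) =
           real (partp (int n))
         + (\<Sum>r. real (partp (int n - int t * int (Suc r) * (2 * int (Suc r) * int m - int m + 2))))
         - (\<Sum>s. real (partp (int n - int t * (2 * int (Suc s) - 1) * (int (Suc s) * int m - int m + 1))))"
proof -
  have "int (Suc r * (2 * t + m * t * (2 * r + 1))) =
      int t * int (Suc r) * (2 * int (Suc r) * int m - int m + 2)" for r
    by (simp add: algebra_simps)
  moreover have "int (Suc (2 * s) * (t + m * t * s)) =
      int t * (2 * int (Suc s) - 1) * (int (Suc s) * int m - int m + 1)" for s
    by (simp add: algebra_simps)
  ultimately show ?thesis
    using pmex_eq_alternating_sum_partp[of t "m * t" n] assms by simp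
qed

end
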